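(* Let $n\ge 2$ and $k\ge 1$. There is no deterministic exploration algorithm that, knowing $n$ and $k$, having unlimited memory, but having no information on (any upper bound on) the system period $p$, solves PVG-Exploration of every feasible anonymous homogeneous PV graph with $n$ sites and $k$ carriers. In other words, in anonymous systems, PVG-Exploration is unsolvable without knowledge of an upper bound on the period, even when restricted to homogeneous systems.
   Context: A PV (periodically varying) system consists of a finite set $S$ of $n$ sites and a set $C$ of $k\le n$ carriers. Each carrier $c$ has a distinct identifier and a route $\pi(c)=\langle x_0,\dots,x_{p(c)-1}\rangle$, a finite sequence of sites (repetitions allowed) of length $p(c)\ge 1$ called its period; for any integer $j$, $\pi(c)[j]$ denotes $x_{j \bmod p(c)}$. At each time $t\in\mathbb{N}$ carrier $c$ is at site $\pi(c)[t]$ and moves to $\pi(c)[t+1]$ (it activates the edge $(\pi(c)[t],\pi(c)[t+1])$ at time $t$). The PV graph $\vec G_R$ (for $R=\{\pi(c):c\in C\}$) is the directed edge-labelled multigraph on $S$ with edges $(x_i,x_{i+1},i)$, $0\le i<p(c)$ (indices mod $p(c)$), for every carrier $c$. Let $p=\max_{c}p(c)$. The system/graph is homogeneous if all carriers have the same period and heterogeneous otherwise. Sites are either anonymous (indistinguishable to the agent) or have distinct identifiers. An exploring agent is injected at time $0$ at a site of $\mathrm{start}(\vec G_R)=\{\pi(c)[0]:c\in C\}$. If at time $t$ the agent is at site $x$, it must either choose a carrier $c$ with $\pi(c)[t]=x$ and ride with it to $\pi(c)[t+1]$ (one move, arriving at time $t+1$), or halt and exit the system; it cannot wait at a site. At each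 time the agent observes the identifiers of the carriers present at its current site (and, in systems with ids, the identifier of the site). An exploration algorithm is a deterministic rule mapping the agent's a priori knowledge and history of observations to its next action; its execution from injection site $x$ determines a walk $\xi(x)$. A walk is a concrete cover if it visits every site of $S$. An algorithm solves PVG-Exploration of $\vec G_R$ if for every injection site $x\in\mathrm{start}(\vec G_R)$ the walk $\xi(x)$ is finite (the agent halts) and is a concrete cover. $\vec G_R$ is feasible if from the starting point of every carrier there exists a walk realizable by the agent (riding carriers and switching between carriers that are at the same site at the same time) that is a concrete cover. *)

theory Defs
  imports Main
begin

text \<open>Sites are the natural numbers 0..<n (anonymous: the agent never observes them).
Carriers are identified by natural-number identifiers forming a finite set C with card C = k;
the route of carrier c is the list R c (its period is length (R c)).\<close>

type_synonym routes = "nat \<Rightarrow> nat list"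

definition at :: "routes \<Rightarrow> nat \<Rightarrow> nat \<Rightarrow> nat" where
  "at R c t = R c ! (t mod length (R c))"

definition pv_system :: "nat \<Rightarrow> nat \<Rightarrow> nat set \<Rightarrow> routes \<Rightarrow> bool" where
  "pv_system n k C R \<longleftrightarrow> finite C \<and> card C = k \<and>
     (\<forall>c\<in>C. R c \<noteq> [] \<and> set (R c) \<subseteq> {0..<n})"

definition homogeneous :: "nat set \<Rightarrow> routes \<Rightarrow> bool" where
  "homogeneous C R \<longleftrightarrow> (\<exists>p. \<forall>c\<in>C. length (R c) = p)"

definition start :: "nat set \<Rightarrow> routes \<Rightarrow> nat set" where
  "start C R = {at R c 0 | c. c \<in> C}"

text \<open>Feasibility: from the starting point of every carrier there is a realizable walk
(riding carriers, switching only between carriers co-located at the same time) visiting all sites.\<close>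
definition feasible :: "nat \<Rightarrow> nat set \<Rightarrow> routes \<Rightarrow> bool" where
  "feasible n C R \<longleftrightarrow> (\<forall>c0\<in>C. \<exists>T w. w 0 = at R c0 0 \<and>
      (\<forall>t<T. \<exists>c\<in>C. at R c t = w t \<and> at R c (Suc t) = w (Suc t)) \<and>
      {0..<n} \<subseteq> w ` {0..T})"

definition obs :: "nat set \<Rightarrow> routes \<Rightarrow> nat \<Rightarrow> nat \<Rightarrow> nat set" where
  "obs C R x t = {c \<in> C. at R c t = x}"

text \<open>An exploration algorithm for anonymous systems maps the history of observations
(observations at times 0..t) to an action: Some c = ride carrier c, None = halt.
Arbitrary functions model unlimited memory; n and k are known since the algorithm
is chosen after n and k are fixed.\<close>
type_synonym algorithm = "nat set list \<Rightarrow> nat option"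

definition observations :: "nat set \<Rightarrow> routes \<Rightarrow> nat list \<Rightarrow> nat set list" where
  "observations C R ps = map (\<lambda>i. obs C R (ps ! i) i) [0..<length ps]"

text \<open>positions A C R x t: the agent's positions at times 0..t (meaningful as long as
the agent has not halted and its choices were valid).\<close>
fun positions :: "algorithm \<Rightarrow> nat set \<Rightarrow> routes \<Rightarrow> nat \<Rightarrow> nat \<Rightarrow> nat list" where
  "positions A C R x 0 = [x]"
| "positions A C R x (Suc t) =
     (let ps = positions A C R x t in
      ps @ [case A (observations C R ps) of Some c \<Rightarrow> at R c (Suc t) | None \<Rightarrow> last ps])"

definition solves_from :: "nat \<Rightarrow> algorithm \<Rightarrow> nat set \<Rightarrow> routes \<Rightarrow> nat \<Rightarrow> bool" where
  "solves_from n A C R x \<longleftrightarrow> (\<exists>T. let ps = positions A C R x T in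
      A (observations C R ps) = None \<and>
      (\<forall>t<T. \<exists>c. A (observations C R (take (Suc t) ps)) = Some c \<and> c \<in> obs C R (ps ! t) t) \<and>
      {0..<n} \<subseteq> set ps)"

definition solves :: "nat \<Rightarrow> algorithm \<Rightarrow> nat set \<Rightarrow> routes \<Rightarrow> bool" where
  "solves n A C R \<longleftrightarrow> (\<forall>x\<in>start C R. solves_from n A C R x)"

end

theory Submission
  imports Defs
begin

(* Idea: give all k carriers the same route r.  Then at every time the agent sees
   all carriers at its site, so its observation history is the constant list
   replicate (t+1) C, independent of r; whichever carrier it rides, it follows r.
   Hence the halting time T of the algorithm is the same for every such system,
   and within T+1 steps the agent only sees the first T+1 entries of r.

   The theorem follows by running the algorithm on the route [0..<n] to obtain T,
   and then on the route that stays at site 0 for T+1 steps before touching the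
   other sites: this system is feasible, but the agent halts before leaving 0. *)

lemma length_positions: "length (positions A C R x t) = Suc t"
  by (induction t) (auto simp: Let_def)

lemma take_positions:
  assumes "t \<le> T"
  shows "take (Suc t) (positions A C R x T) = positions A C R x t"
  using assms
proof (induction T)
  case 0
  then show ?case by simp
next
  case (Suc T)
  show ?case
  proof (cases "t = Suc T")
    case True
    then show ?thesis using length_positions[of A C R x "Suc T"] by simp
  next
    case False
    with Suc.prems have "t \<le> T" by simp
    moreover have "Suc t \<le> length (positions A C R x T)"
      using \<open>t \<le> T\<close> by (simp add: length_positions)
    ultimately show ?thesis using Suc.IH by (simp add: Let_def)
  qed
qed

(* In a uniform system (every carrier has route r), along the route every carrier is
   present at every time, so the observation history is constant. *)
lemma observations_uniform:
  "observations C (\<lambda>_. r) (map (at (\<lambda>_. r) 0) [0..<Suc t]) = replicate (Suc t) C"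
proof -
  have "map (\<lambda>i. obs C (\<lambda>_. r) (map (at (\<lambda>_. r) 0) [0..<Suc t] ! i) i) [0..<Suc t]
        = map (\<lambda>_. C) [0..<Suc t]"
    by (rule map_cong) (auto simp del: upt_Suc simp: obs_def at_def)
  then show ?thesis
    unfolding observations_def by (simp del: upt_Suc add: map_replicate_const)
qed

lemma positions_uniform:
  assumes "r \<noteq> []"
    and riding: "\<forall>s<t. A (replicate (Suc s) C) \<noteq> None"
  shows "positions A C (\<lambda>_. r) (r ! 0) t = map (at (\<lambda>_. r) 0) [0..<Suc t]"
  using riding
proof (induction t)
  case 0
  then show ?case using \<open>r \<noteq> []\<close> by (simp add: at_def)
next
  case (Suc t)
  then have walk: "positions A C (\<lambda>_. r) (r ! 0) t = map (at (\<lambda>_. r) 0) [0..<Suc t]"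
    by simp
  obtain c where "A (replicate (Suc t) C) = Some c"
    using Suc.prems by blast
  then show ?case
    using walk observations_uniform[of C r t] by (simp add: Let_def at_def)
qed

lemma solves_uniform:
  assumes "r \<noteq> []" and "solves_from n A C (\<lambda>_. r) (r ! 0)"
  obtains T where "A (replicate (Suc T) C) = None"
    and "\<forall>t<T. A (replicate (Suc t) C) \<noteq> None"
    and "{0..<n} \<subseteq> at (\<lambda>_. r) 0 ` {..T}"
proof -
  let ?ps = "positions A C (\<lambda>_. r) (r ! 0)"
  obtain T where halt: "A (observations C (\<lambda>_. r) (?ps T)) = None"
    and legal: "\<forall>t<T. \<exists>c. A (observations C (\<lambda>_. r) (take (Suc t) (?ps T))) = Some c"
    and cover: "{0..<n} \<subseteq> set (?ps T)"
    using assms(2) unfolding solves_from_def Let_def by blast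
  have riding: "\<forall>s<t. A (replicate (Suc s) C) \<noteq> None" if "t \<le> T" for t
    using that
  proof (induction t rule: less_induct)
    case (less t)
    show ?case
    proof (intro allI impI)
      fix s assume "s < t"
      with less have "?ps s = map (at (\<lambda>_. r) 0) [0..<Suc s]"
        using positions_uniform[OF \<open>r \<noteq> []\<close>] by simp
      moreover have "take (Suc s) (?ps T) = ?ps s"
        using \<open>s < t\<close> less.prems by (simp add: take_positions)
      moreover obtain c where "A (observations C (\<lambda>_. r) (take (Suc s) (?ps T))) = Some c"
        using legal \<open>s < t\<close> less.prems by fastforce
      ultimately show "A (replicate (Suc s) C) \<noteq> None"
        using observations_uniform[of C r s] by simp
    qed
  qed
  have walk: "?ps T = map (at (\<lambda>_. r) 0) [0..<Suc T]"
    using positions_uniform[OF \<open>r \<noteq> []\<close> riding] by simp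
  show thesis
  proof
    show "A (replicate (Suc T) C) = None"
      using halt walk observations_uniform[of C r T] by simp
    show "\<forall>t<T. A (replicate (Suc t) C) \<noteq> None"
      using riding[OF order_refl] .
    show "{0..<n} \<subseteq> at (\<lambda>_. r) 0 ` {..T}"
      using cover walk by (auto simp: atLeast0LessThan lessThan_Suc_atMost)
  qed
qed

lemma feasible_uniform:
  assumes "{0..<n} \<subseteq> set r"
  shows "feasible n C (\<lambda>_. r)"
  unfolding feasible_def
proof
  fix c0 assume "c0 \<in> C"
  let ?w = "at (\<lambda>_. r) 0"
  have "{0..<n} \<subseteq> ?w ` {0..length r - 1}"
  proof
    fix x assume "x \<in> {0..<n}"
    with assms have "x \<in> set r" by blast
    then obtain i where "i < length r" "r ! i = x"
      by (metis in_set_conv_nth)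
    then show "x \<in> ?w ` {0..length r - 1}"
      by (auto simp: at_def intro!: image_eqI[of x _ i])
  qed
  moreover have "?w 0 = at (\<lambda>_. r) c0 0"
    by (simp add: at_def)
  moreover have "\<forall>t<length r - 1. \<exists>c\<in>C. at (\<lambda>_. r) c t = ?w t \<and> at (\<lambda>_. r) c (Suc t) = ?w (Suc t)"
    using \<open>c0 \<in> C\<close> by (auto simp: at_def)
  ultimately show "\<exists>T w. w 0 = at (\<lambda>_. r) c0 0 \<and>
      (\<forall>t<T. \<exists>c\<in>C. at (\<lambda>_. r) c t = w t \<and> at (\<lambda>_. r) c (Suc t) = w (Suc t)) \<and>
      {0..<n} \<subseteq> w ` {0..T}"
    by blast
qed

lemma uniform_instance:
  assumes "set r = {0..<n}" and "r \<noteq> []" and "k \<ge> 1"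
  shows "pv_system n k {0..<k} (\<lambda>_. r) \<and> homogeneous {0..<k} (\<lambda>_. r)
         \<and> feasible n {0..<k} (\<lambda>_. r) \<and> r ! 0 \<in> start {0..<k} (\<lambda>_. r)"
proof (intro conjI)
  show "pv_system n k {0..<k} (\<lambda>_. r)" "homogeneous {0..<k} (\<lambda>_. r)"
    using assms by (auto simp: pv_system_def homogeneous_def)
  show "feasible n {0..<k} (\<lambda>_. r)"
    using assms(1) by (simp add: feasible_uniform)
  have "at (\<lambda>_. r) 0 0 = r ! 0"
    using assms(2) by (simp add: at_def)
  then show "r ! 0 \<in> start {0..<k} (\<lambda>_. r)"
    using assms(3) unfolding start_def by (auto intro!: exI[of _ 0])
qed

lemma at_padded_route:
  assumes "i < m"
  shows "at (\<lambda>_. replicate m x @ rs) c i = x"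
  using assms by (simp add: at_def nth_append)

theorem mainTheorem1:
  fixes n k :: nat
  assumes "n \<ge> 2" and "k \<ge> 1" and "k \<le> n"
  shows "\<not> (\<exists>A :: algorithm. \<forall>C R. pv_system n k C R \<and> homogeneous C R \<and> feasible n C R
              \<longrightarrow> solves n A C R)"
proof
  assume "\<exists>A :: algorithm. \<forall>C R. pv_system n k C R \<and> homogeneous C R \<and> feasible n C R
              \<longrightarrow> solves n A C R"
  then obtain A :: algorithm where hA: "\<And>r. set r = {0..<n} \<Longrightarrow> r \<noteq> [] \<Longrightarrow>
      solves_from n A {0..<k} (\<lambda>_. r) (r ! 0)"
    using uniform_instance[OF _ _ \<open>k \<ge> 1\<close>] unfolding solves_def by blast
  let ?C = "{0..<k} :: nat set"
  have "set [0..<n] = {0..<n}" "[0..<n] \<noteq> []" using assms by auto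
  then obtain T1 where T1: "A (replicate (Suc T1) ?C) = None"
    using solves_uniform[OF _ hA] by metis
  define r where "r = replicate (Suc T1) (0::nat) @ [1..<n]"
  have "set r = {0..<n}" "r \<noteq> []" using assms by (auto simp: r_def)
  then obtain T2 where T2: "\<forall>t<T2. A (replicate (Suc t) ?C) \<noteq> None"
    and cover: "{0..<n} \<subseteq> at (\<lambda>_. r) 0 ` {..T2}"
    using solves_uniform[OF _ hA] by metis
  have "T2 \<le> T1"
  proof (rule ccontr)
    assume "\<not> T2 \<le> T1"
    with T2 have "A (replicate (Suc T1) ?C) \<noteq> None" by simp
    with T1 show False by simp
  qed
  have stays: "at (\<lambda>_. r) 0 i = 0" if "i \<le> T2" for i
    using that \<open>T2 \<le> T1\<close> at_padded_route[of i "Suc T1" 0 "[1..<n]" 0]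
    unfolding r_def by simp
  have "1 \<in> {0..<n}" using \<open>n \<ge> 2\<close> by simp
  with cover obtain i where "i \<le> T2" "at (\<lambda>_. r) 0 i = 1"
    by (metis atMost_iff imageE subsetD)
  with stays show False by simp
qed

end
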